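(* For any single-elimination tournament $\mathcal{T}$ and any two distinct players $a,b$, there exists a unique match $x$ of $\mathcal{T}$ which has in-neighbours $u_a,u_b\in N^-(x)$ satisfying $P(u_a)\cap\{a,b\}=\{a\}$ and $P(u_b)\cap\{a,b\}=\{b\}$.
   Context: A single-elimination tournament is a finite directed graph $\mathcal{T}$ such that: (a) $\mathcal{T}$ has exactly one sink (vertex with no out-neighbours); (b) every non-sink vertex has exactly one out-neighbour; (c) $\mathcal{T}$ has no directed cycles; (d) $|N^-(v)|\ne 1$ for every vertex $v$, where $N^-(v)$ denotes the set of in-neighbours of $v$. The players are the sources (vertices with no in-neighbours) and the matches are the non-source vertices. For a vertex $u$, $P(u)$ is the set of players $a$ for which there is a directed walk from $a$ to $u$ (a sequence $(u_1,\dots,u_t)$, $t\ge1$, $u_1=a$, $u_t=u$, each $u_{i+1}$ an out-neighbour of $u_i$). *)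

theory Defs
  imports Main
begin

definition out_nbrs :: "('a \<times> 'a) set \<Rightarrow> 'a \<Rightarrow> 'a set" where
  "out_nbrs E v = {w. (v, w) \<in> E}"

definition in_nbrs :: "('a \<times> 'a) set \<Rightarrow> 'a \<Rightarrow> 'a set" where
  "in_nbrs E v = {u. (u, v) \<in> E}"

definition single_elim_tournament :: "'a set \<Rightarrow> ('a \<times> 'a) set \<Rightarrow> bool" where
  "single_elim_tournament V E \<longleftrightarrow>
     finite V \<and> E \<subseteq> V \<times> V \<and>
     (\<exists>!s. s \<in> V \<and> out_nbrs E s = {}) \<and>
     (\<forall>v\<in>V. out_nbrs E v \<noteq> {} \<longrightarrow> card (out_nbrs E v) = 1) \<and>
     (\<forall>v. (v, v) \<notin> E\<^sup>+) \<and>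
     (\<forall>v\<in>V. card (in_nbrs E v) \<noteq> 1)"

definition players :: "'a set \<Rightarrow> ('a \<times> 'a) set \<Rightarrow> 'a set" where
  "players V E = {v \<in> V. in_nbrs E v = {}}"

definition matches :: "'a set \<Rightarrow> ('a \<times> 'a) set \<Rightarrow> 'a set" where
  "matches V E = V - players V E"

definition P :: "'a set \<Rightarrow> ('a \<times> 'a) set \<Rightarrow> 'a \<Rightarrow> 'a set" where
  "P V E u = {a \<in> players V E. (a, u) \<in> E\<^sup>*}"

end

theory Submission
  imports Defs
begin

text \<open>The arc relation of a single-elimination tournament is finite, acyclic and
single-valued, so the descendants of any vertex form a chain ending at the sink. The
required match is the least common descendant \<open>x\<close> of \<open>a\<close> and \<open>b\<close>: as \<open>a\<close> and \<open>b\<close> are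
sources, \<open>x\<close> is reached from each of them along a last arc whose tail is not a common
descendant. Conversely, a match \<open>x\<close> with such in-neighbours precedes every common
descendant \<open>y\<close>; otherwise the path from \<open>y\<close> would enter \<open>x\<close> through the same arc as the
path from \<open>a\<close>, making the in-neighbour on \<open>a\<close>'s side reachable from \<open>b\<close>.\<close>

lemma single_elim_tournament_single_valued:
  assumes "single_elim_tournament V E"
  shows "single_valued E"
proof (rule single_valuedI)
  fix v w w'
  assume vw: "(v, w) \<in> E" and vw': "(v, w') \<in> E"
  have "v \<in> V" "\<forall>v\<in>V. out_nbrs E v \<noteq> {} \<longrightarrow> card (out_nbrs E v) = 1"
    using assms vw unfolding single_elim_tournament_def by auto
  moreover have "w \<in> out_nbrs E v" "w' \<in> out_nbrs E v"
    using vw vw' by (auto simp: out_nbrs_def)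
  ultimately show "w = w'"
    by (metis card_1_singletonE empty_iff singletonD)
qed

lemma single_elim_tournament_acyclic:
  "single_elim_tournament V E \<Longrightarrow> acyclic E"
  by (simp add: single_elim_tournament_def acyclic_def)

lemma single_elim_tournament_finite:
  "single_elim_tournament V E \<Longrightarrow> finite E"
  unfolding single_elim_tournament_def by (meson finite_SigmaI finite_subset)

lemma finite_acyclic_reaches_out_nbrs_empty:
  assumes "finite E" and "acyclic E"
  obtains s where "(v, s) \<in> E\<^sup>*" and "out_nbrs E s = {}"
proof -
  have "wf (E\<inverse>)"
    using assms by (rule finite_acyclic_wf_converse)
  then obtain s where "s \<in> E\<^sup>* `` {v}" and "\<And>t. (s, t) \<in> E \<Longrightarrow> t \<notin> E\<^sup>* `` {v}"
    by (rule wfE_min[where Q = "E\<^sup>* `` {v}"]) auto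
  then show thesis
    using that by (auto simp: out_nbrs_def intro: rtrancl_into_rtrancl)
qed

lemma single_elim_tournament_common_descendant:
  assumes T: "single_elim_tournament V E" and "u \<in> V" and "v \<in> V"
  obtains y where "(u, y) \<in> E\<^sup>*" and "(v, y) \<in> E\<^sup>*"
proof -
  have sink_unique: "\<exists>!s. s \<in> V \<and> out_nbrs E s = {}" and EV: "E \<subseteq> V \<times> V"
    using T by (auto simp: single_elim_tournament_def)
  have in_V: "s \<in> V" if "(w, s) \<in> E\<^sup>*" and "w \<in> V" for w s
    using that EV by (induction rule: rtrancl_induct) auto
  obtain s where "(u, s) \<in> E\<^sup>*" "out_nbrs E s = {}"
    using single_elim_tournament_finite[OF T] single_elim_tournament_acyclic[OF T]
    by (rule finite_acyclic_reaches_out_nbrs_empty)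
  moreover obtain t where "(v, t) \<in> E\<^sup>*" "out_nbrs E t = {}"
    using single_elim_tournament_finite[OF T] single_elim_tournament_acyclic[OF T]
    by (rule finite_acyclic_reaches_out_nbrs_empty)
  ultimately have "s = t"
    using sink_unique in_V \<open>u \<in> V\<close> \<open>v \<in> V\<close> by blast
  with \<open>(u, s) \<in> E\<^sup>*\<close> \<open>(v, t) \<in> E\<^sup>*\<close> show thesis
    using that by blast
qed

lemma single_valued_acyclic_in_nbr_unique:
  assumes sv: "single_valued E" and acyc: "acyclic E"
    and "(a, u) \<in> E\<^sup>*" "(a, w) \<in> E\<^sup>*" "(u, x) \<in> E" "(w, x) \<in> E"
  shows "u = w"
proof -
  have "u = w" if "(u, w) \<in> E\<^sup>*" "(u, x) \<in> E" "(w, x) \<in> E" for u w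
  proof (rule ccontr)
    assume "u \<noteq> w"
    with \<open>(u, w) \<in> E\<^sup>*\<close> obtain y where "(u, y) \<in> E" "(y, w) \<in> E\<^sup>*"
      by (metis converse_rtranclE)
    moreover have "y = x"
      using sv \<open>(u, y) \<in> E\<close> \<open>(u, x) \<in> E\<close> by (rule single_valuedD)
    ultimately have "(w, w) \<in> E\<^sup>+"
      using \<open>(w, x) \<in> E\<close> by (meson rtrancl_into_trancl2)
    with acyc show False
      by (simp add: acyclic_def)
  qed
  with single_valued_confluent[OF sv \<open>(a, u) \<in> E\<^sup>*\<close> \<open>(a, w) \<in> E\<^sup>*\<close>] assms(5,6) show ?thesis
    by metis
qed

definition first_meeting :: "('a \<times> 'a) set \<Rightarrow> 'a \<Rightarrow> 'a \<Rightarrow> 'a \<Rightarrow> bool" where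
  "first_meeting E a b x \<longleftrightarrow>
     (\<exists>ua ub. (ua, x) \<in> E \<and> (ub, x) \<in> E \<and>
              (a, ua) \<in> E\<^sup>* \<and> (b, ua) \<notin> E\<^sup>* \<and> (b, ub) \<in> E\<^sup>* \<and> (a, ub) \<notin> E\<^sup>*)"

lemma first_meeting_common_descendant:
  "first_meeting E a b x \<Longrightarrow> (a, x) \<in> E\<^sup>* \<and> (b, x) \<in> E\<^sup>*"
  by (auto simp: first_meeting_def)

lemma first_meeting_least_common_descendant:
  assumes sv: "single_valued E" and acyc: "acyclic E" and x: "first_meeting E a b x"
    and a_y: "(a, y) \<in> E\<^sup>*" and b_y: "(b, y) \<in> E\<^sup>*"
  shows "(x, y) \<in> E\<^sup>*"
proof -
  obtain ua where ua: "(ua, x) \<in> E" "(a, ua) \<in> E\<^sup>*" "(b, ua) \<notin> E\<^sup>*"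
    using x by (auto simp: first_meeting_def)
  have "(a, x) \<in> E\<^sup>*"
    using first_meeting_common_descendant[OF x] ..
  have "(y, x) \<notin> E\<^sup>+"
  proof
    assume "(y, x) \<in> E\<^sup>+"
    then obtain w where "(y, w) \<in> E\<^sup>*" "(w, x) \<in> E"
      by (meson tranclD2)
    moreover have "ua = w"
      using single_valued_acyclic_in_nbr_unique[OF sv acyc ua(2) _ ua(1) \<open>(w, x) \<in> E\<close>]
        a_y \<open>(y, w) \<in> E\<^sup>*\<close> by (blast intro: rtrancl_trans)
    ultimately show False
      using ua(3) b_y by (blast intro: rtrancl_trans)
  qed
  then show ?thesis
    using single_valued_confluent[OF sv \<open>(a, x) \<in> E\<^sup>*\<close> a_y] by (metis rtranclD)
qed

lemma first_meeting_unique: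
  assumes "single_valued E" and "acyclic E"
    and "first_meeting E a b x" and "first_meeting E a b x'"
  shows "x = x'"
proof (rule antisymD[OF acyclic_impl_antisym_rtrancl[OF \<open>acyclic E\<close>]])
  show "(x, x') \<in> E\<^sup>*"
    using first_meeting_common_descendant[OF assms(4)]
    by (intro first_meeting_least_common_descendant[OF assms(1-3)]) simp_all
  show "(x', x) \<in> E\<^sup>*"
    using first_meeting_common_descendant[OF assms(3)]
    by (intro first_meeting_least_common_descendant[OF assms(1,2,4)]) simp_all
qed

lemma first_meeting_exists:
  assumes "finite E" and "acyclic E"
    and incomparable: "(a, b) \<notin> E\<^sup>*" "(b, a) \<notin> E\<^sup>*"
    and a_y: "(a, y) \<in> E\<^sup>*" and b_y: "(b, y) \<in> E\<^sup>*"
  shows "\<exists>x. first_meeting E a b x"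
proof -
  let ?C = "{y. (a, y) \<in> E\<^sup>* \<and> (b, y) \<in> E\<^sup>*}"
  have "wf E"
    using assms(1,2) by (rule finite_acyclic_wf)
  then obtain x where "x \<in> ?C" and x_min: "\<And>w. (w, x) \<in> E \<Longrightarrow> w \<notin> ?C"
    using a_y b_y by (auto elim: wfE_min[where Q = ?C])
  then have "(a, x) \<in> E\<^sup>+" "(b, x) \<in> E\<^sup>+"
    using incomparable by (auto simp: rtrancl_eq_or_trancl)
  then obtain ua ub where ua: "(a, ua) \<in> E\<^sup>*" "(ua, x) \<in> E"
    and ub: "(b, ub) \<in> E\<^sup>*" "(ub, x) \<in> E"
    by (meson tranclD2)
  moreover have "(b, ua) \<notin> E\<^sup>*"
    using x_min[OF ua(2)] ua(1) by blast
  moreover have "(a, ub) \<notin> E\<^sup>*"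
    using x_min[OF ub(2)] ub(1) by blast
  ultimately show ?thesis
    unfolding first_meeting_def by blast
qed

lemma players_not_reachable:
  "a \<in> players V E \<Longrightarrow> b \<noteq> a \<Longrightarrow> (b, a) \<notin> E\<^sup>*"
  by (auto simp: players_def in_nbrs_def elim: rtranclE)

lemma P_inter_players_eq_singleton:
  assumes "a \<in> players V E" and "b \<in> players V E" and "a \<noteq> b"
  shows "P V E u \<inter> {a, b} = {a} \<longleftrightarrow> (a, u) \<in> E\<^sup>* \<and> (b, u) \<notin> E\<^sup>*"
  using assms by (auto simp: P_def)

lemma single_elim_tournament_arc_head_in_matches:
  "single_elim_tournament V E \<Longrightarrow> (u, x) \<in> E \<Longrightarrow> x \<in> matches V E"
  by (auto simp: single_elim_tournament_def matches_def players_def in_nbrs_def)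

theorem lemma4p2:
  assumes "single_elim_tournament V E"
    and "a \<in> players V E" and "b \<in> players V E" and "a \<noteq> b"
  shows "\<exists>!x. x \<in> matches V E \<and>
           (\<exists>ua ub. ua \<in> in_nbrs E x \<and> ub \<in> in_nbrs E x \<and>
                    P V E ua \<inter> {a, b} = {a} \<and> P V E ub \<inter> {a, b} = {b})"
proof -
  note T = assms(1)
  note P_a = P_inter_players_eq_singleton[OF assms(2-4)]
    and P_b = P_inter_players_eq_singleton[OF assms(3,2) assms(4)[symmetric],
        unfolded insert_commute[of b a]]
  have "(a, b) \<notin> E\<^sup>*" "(b, a) \<notin> E\<^sup>*"
    using players_not_reachable[OF assms(3)] players_not_reachable[OF assms(2)] assms(4)
    by auto
  moreover have "a \<in> V" "b \<in> V"
    using assms(2,3) by (auto simp: players_def)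
  then obtain y where "(a, y) \<in> E\<^sup>*" "(b, y) \<in> E\<^sup>*"
    by (rule single_elim_tournament_common_descendant[OF T])
  ultimately obtain x where x: "first_meeting E a b x"
    using first_meeting_exists[OF single_elim_tournament_finite[OF T]
        single_elim_tournament_acyclic[OF T]] by blast
  have char: "x \<in> matches V E \<and>
           (\<exists>ua ub. ua \<in> in_nbrs E x \<and> ub \<in> in_nbrs E x \<and>
                    P V E ua \<inter> {a, b} = {a} \<and> P V E ub \<inter> {a, b} = {b})
        \<longleftrightarrow> first_meeting E a b x" for x
    using single_elim_tournament_arc_head_in_matches[OF T]
    unfolding P_a P_b first_meeting_def in_nbrs_def mem_Collect_eq by blast
  show ?thesis
    unfolding char
  proof (rule ex1I)
    show "first_meeting E a b x"
      by (rule x)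
  qed (rule first_meeting_unique[OF single_elim_tournament_single_valued[OF T]
        single_elim_tournament_acyclic[OF T] _ x])
qed

end
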